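(* On $\mathbb R^2$ with the Euclidean metric, let $\phi(x,y)=\frac14(x^4+y^4)$ and $X=(x^3+x^2y^2)\partial_x+y^3\partial_y$. Then there exist a neighbourhood $U$ of the origin and a constant $\delta>0$ with $d\phi(X)\ge\delta(|X|^2+|d\phi|^2)$ on $U$, but on no neighbourhood $U'$ of the origin does there exist a smooth $(2,0)$ tensor field $g$ with $g(v,v)>0$ for all $v\ne0$ and $d\phi=g(X,\cdot)$ on $U'$. *)

theory Defs
  imports "HOL-Analysis.Analysis"
begin

fun Ck_on :: "nat \<Rightarrow> 'a::euclidean_space set \<Rightarrow> ('a \<Rightarrow> real) \<Rightarrow> bool" where
  "Ck_on 0 S f = continuous_on S f"
| "Ck_on (Suc k) S f = ((\<forall>x\<in>S. f differentiable (at x)) \<and>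
      (\<forall>i\<in>Basis. Ck_on k S (\<lambda>x. frechet_derivative f (at x) i)))"

definition smooth_on :: "'a::euclidean_space set \<Rightarrow> ('a \<Rightarrow> real) \<Rightarrow> bool" where
  "smooth_on S f = (\<forall>k. Ck_on k S f)"

definition phi :: "real \<times> real \<Rightarrow> real" where
  "phi p = (fst p ^ 4 + snd p ^ 4) / 4"

definition dphi :: "real \<times> real \<Rightarrow> real \<times> real \<Rightarrow> real" where
  "dphi p = frechet_derivative phi (at p)"

definition covec_norm2 :: "(real \<times> real \<Rightarrow> real) \<Rightarrow> real" where
  "covec_norm2 w = (w (1,0))^2 + (w (0,1))^2"

definition Xf :: "real \<times> real \<Rightarrow> real \<times> real" where
  "Xf p = (fst p ^ 3 + fst p ^ 2 * snd p ^ 2, snd p ^ 3)"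

text \<open>Bilinear form on R^2 with matrix (g11 g12; g21 g22) (not assumed symmetric).\<close>
definition bilin :: "real \<Rightarrow> real \<Rightarrow> real \<Rightarrow> real \<Rightarrow> real \<times> real \<Rightarrow> real \<times> real \<Rightarrow> real" where
  "bilin g11 g12 g21 g22 u v =
     g11 * fst u * fst v + g12 * fst u * snd v + g21 * snd u * fst v + g22 * snd u * snd v"

end

theory Submission
  imports Defs
begin

text \<open>The inequality is elementary near the origin, where the cross term \<open>x\<^sup>5 y\<^sup>2\<close> of
  \<open>d\<phi>(X) = x\<^sup>6 + x\<^sup>5 y\<^sup>2 + y\<^sup>6\<close> is dominated by \<open>x\<^sup>6 + y\<^sup>6\<close>.
  For the non-existence part only the first component of \<open>d\<phi> = g(X,\<cdot>)\<close> is needed: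
  \<open>x\<^sup>3 = g\<^sub>1\<^sub>1 (x\<^sup>3 + x\<^sup>2 y\<^sup>2) + g\<^sub>2\<^sub>1 y\<^sup>3\<close>. It forces \<open>g\<^sub>1\<^sub>1(x,0) = 1\<close> and
  \<open>g\<^sub>1\<^sub>1(x,s) \<le> 1 - s\<^sup>2/(4x)\<close> for small \<open>s\<close>, so the second difference of \<open>g\<^sub>1\<^sub>1\<close> in \<open>y\<close>
  at \<open>(x,0)\<close> with step \<open>t\<close> is at most \<open>-t\<^sup>2/(2x)\<close>. This is incompatible with a bounded \<open>\<partial>\<^sub>y\<^sup>2 g\<^sub>1\<^sub>1\<close>
  near the origin as \<open>x \<rightarrow> 0\<close>.\<close>

lemma dphi_eq: "dphi p = (\<lambda>w. fst p ^ 3 * fst w + snd p ^ 3 * snd w)"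
proof -
  have "(phi has_derivative (\<lambda>w. fst p ^ 3 * fst w + snd p ^ 3 * snd w)) (at p)"
    unfolding phi_def [abs_def]
    by (rule has_derivative_eq_rhs, (rule derivative_eq_intros | simp)+)
       (auto simp: fun_eq_iff algebra_simps)
  then show ?thesis
    unfolding dphi_def by (metis frechet_derivative_at)
qed

lemma power4_mult_power2_le: "(x::real) ^ 4 * y ^ 2 \<le> x ^ 6 + y ^ 6"
proof (cases "x\<^sup>2 \<le> y\<^sup>2")
  case True
  have "x ^ 4 * y\<^sup>2 = (x\<^sup>2)\<^sup>2 * y\<^sup>2" by simp
  also have "\<dots> \<le> (y\<^sup>2)\<^sup>2 * y\<^sup>2"
    using True by (intro mult_right_mono power_mono[of "x\<^sup>2" "y\<^sup>2" 2]) auto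
  also have "\<dots> = y ^ 6" by simp
  finally show ?thesis by (simp add: add_increasing)
next
  case False
  then have "x ^ 4 * y\<^sup>2 \<le> x ^ 4 * x\<^sup>2" by (intro mult_left_mono) auto
  also have "\<dots> = x ^ 6" by (simp add: eval_nat_numeral)
  finally show ?thesis by (simp add: add_increasing2 zero_le_even_power)
qed

lemma dphi_X_coercive_ineq:
  fixes x y :: real
  assumes "\<bar>x\<bar> \<le> 1/2" and "\<bar>y\<bar> \<le> 1/2"
  shows "1/10 * ((x^3 + x^2*y^2)\<^sup>2 + (y^3)\<^sup>2 + ((x^3)\<^sup>2 + (y^3)\<^sup>2)) \<le> x^3 * (x^3 + x^2*y^2) + y^3 * y^3"
proof -
  have nonneg: "0 \<le> x ^ 4 * y\<^sup>2" "0 \<le> x ^ 6" "0 \<le> y ^ 6"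
    by (simp_all add: zero_le_even_power)
  have cross: "\<bar>x ^ 5 * y\<^sup>2\<bar> \<le> 1/2 * (x ^ 4 * y\<^sup>2)"
  proof -
    have "\<bar>x ^ 5 * y\<^sup>2\<bar> = \<bar>x\<bar> * (x ^ 4 * y\<^sup>2)"
      by (simp add: abs_mult power_abs[symmetric] eval_nat_numeral)
    also have "\<dots> \<le> 1/2 * (x ^ 4 * y\<^sup>2)"
      using assms(1) nonneg by (intro mult_right_mono) auto
    finally show ?thesis .
  qed
  have quartic: "x ^ 4 * y ^ 4 \<le> 1/4 * (x ^ 4 * y\<^sup>2)"
  proof -
    have "\<bar>y\<bar>\<^sup>2 \<le> (1/2)\<^sup>2" using assms(2) by (intro power_mono) auto
    then have "x ^ 4 * y\<^sup>2 * y\<^sup>2 \<le> x ^ 4 * y\<^sup>2 * (1/4)"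
      using nonneg by (intro mult_left_mono) (auto simp: power2_eq_square)
    then show ?thesis by (simp add: eval_nat_numeral algebra_simps)
  qed
  have square: "(x^3 + x^2*y^2)\<^sup>2 \<le> 2 * x ^ 6 + 2 * (x ^ 4 * y ^ 4)"
    using zero_le_power2[of "x^3 - x^2*y^2"] by (simp add: power2_eq_square eval_nat_numeral algebra_simps)
  have "x^3 * (x^3 + x^2*y^2) + y^3 * y^3 = x ^ 6 + x ^ 5 * y\<^sup>2 + y ^ 6"
    by (simp add: eval_nat_numeral algebra_simps)
  moreover have "(x^3)\<^sup>2 = x ^ 6" "(y^3)\<^sup>2 = y ^ 6"
    by (simp_all add: power_mult[symmetric])
  ultimately show ?thesis
    using power4_mult_power2_le[of x y] cross quartic square nonneg by argo
qed

lemma dphi_X_coercive: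
  "\<exists>U \<delta>. open U \<and> (0::real \<times> real) \<in> U \<and> \<delta> > 0 \<and>
     (\<forall>p\<in>U. dphi p (Xf p) \<ge> \<delta> * ((norm (Xf p))\<^sup>2 + covec_norm2 (dphi p)))"
proof (intro exI conjI ballI)
  show "open (ball (0::real \<times> real) (1/2))" "(0::real \<times> real) \<in> ball 0 (1/2)" "(0::real) < 1/10"
    by simp_all
  fix p :: "real \<times> real"
  assume "p \<in> ball 0 (1/2)"
  moreover obtain x y where p: "p = (x, y)" by fastforce
  ultimately have "norm (x, y) < 1/2" by simp
  then have "\<bar>x\<bar> \<le> 1/2" "\<bar>y\<bar> \<le> 1/2"
    using norm_fst_le[of x y] norm_snd_le[of y x] by simp_all
  then show "1/10 * ((norm (Xf p))\<^sup>2 + covec_norm2 (dphi p)) \<le> dphi p (Xf p)"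
    using dphi_X_coercive_ineq by (simp add: p dphi_eq covec_norm2_def Xf_def norm_Pair)
qed

lemma has_real_derivative_slice_snd:
  fixes g :: "'a::real_normed_vector \<times> real \<Rightarrow> real"
  assumes "g differentiable (at (x, t))"
  shows "((\<lambda>s. g (x, s)) has_real_derivative frechet_derivative g (at (x, t)) (0, 1)) (at t)"
proof -
  let ?D = "frechet_derivative g (at (x, t))"
  have D: "(g has_derivative ?D) (at (x, t))"
    using assms frechet_derivative_works by blast
  have "((\<lambda>s. (x, s)) has_derivative (\<lambda>s. (0, s))) (at t)"
    by (intro derivative_eq_intros) auto
  from has_derivative_compose[OF this D]
  have "((\<lambda>s. g (x, s)) has_derivative (\<lambda>s. ?D (0, s))) (at t)"
    by (simp add: o_def)
  moreover have "(\<lambda>s. ?D (0, s)) = (*) (?D (0, 1))"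
  proof
    show "?D (0, s) = ?D (0, 1) * s" for s
      using linear_scale[OF has_derivative_linear[OF D], of s "(0, 1)"] by (simp add: mult.commute)
  qed
  ultimately show ?thesis
    unfolding has_field_derivative_def by simp
qed

lemma Ck_on_Suc_slice_snd:
  fixes f :: "'a::euclidean_space \<times> real \<Rightarrow> real"
  assumes "Ck_on (Suc k) U f"
  shows "Ck_on k U (\<lambda>p. frechet_derivative f (at p) (0, 1))"
    and "(x, t) \<in> U \<Longrightarrow> ((\<lambda>s. f (x, s)) has_real_derivative frechet_derivative f (at (x, t)) (0, 1)) (at t)"
proof -
  have "(0, 1) \<in> (Basis :: ('a \<times> real) set)" by (simp add: Basis_prod_def)
  then show "Ck_on k U (\<lambda>p. frechet_derivative f (at p) (0, 1))"
    using assms by simp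
  show "(x, t) \<in> U \<Longrightarrow> ((\<lambda>s. f (x, s)) has_real_derivative frechet_derivative f (at (x, t)) (0, 1)) (at t)"
    using assms by (auto intro: has_real_derivative_slice_snd)
qed

lemma second_difference_ge:
  fixes f f' f'' :: "real \<Rightarrow> real"
  assumes "t > 0"
    and deriv: "\<And>s. \<bar>s\<bar> \<le> t \<Longrightarrow> (f has_real_derivative f' s) (at s) \<and> (f' has_real_derivative f'' s) (at s)"
    and lower: "\<And>s. \<bar>s\<bar> \<le> t \<Longrightarrow> m \<le> f'' s"
  shows "m * t\<^sup>2 \<le> f t + f (-t) - 2 * f 0"
proof -
  define D :: "nat \<Rightarrow> real \<Rightarrow> real" where "D n = (if n = 0 then f else if n = 1 then f' else f'')" for n
  have D: "\<forall>n s. n < 2 \<and> -t \<le> s \<and> s \<le> t \<longrightarrow> (D n has_real_derivative D (Suc n) s) (at s)"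
    using deriv by (auto simp: D_def less_2_cases_iff abs_le_iff)
  have sum2: "{..<2::nat} = {0, 1}" by auto
  obtain b where b: "0 < b" "b < t" "f t = f 0 + f' 0 * t + f'' b / 2 * t\<^sup>2"
    using Taylor_up[of 2 D f "-t" t 0] D \<open>t > 0\<close> by (auto simp: D_def sum2)
  obtain a where a: "-t < a" "a < 0" "f (-t) = f 0 - f' 0 * t + f'' a / 2 * t\<^sup>2"
    using Taylor_down[of 2 D f "-t" t 0] D \<open>t > 0\<close> by (auto simp: D_def sum2)
  have "m * t\<^sup>2 \<le> (f'' a + f'' b) / 2 * t\<^sup>2"
    using lower[of a] lower[of b] a b by (intro mult_right_mono) auto
  also have "\<dots> = f t + f (-t) - 2 * f 0"
    using a(3) b(3) by (simp add: algebra_simps add_divide_distrib)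
  finally show ?thesis .
qed

lemma first_component_coefficient_le:
  fixes a b x s :: real
  assumes "x > 0" "s\<^sup>2 \<le> x" "\<bar>b * s\<bar> \<le> x\<^sup>2 / 2"
    and eq: "x ^ 3 = a * (x ^ 3 + x\<^sup>2 * s\<^sup>2) + b * s ^ 3"
  shows "a - 1 \<le> - s\<^sup>2 / (4 * x)"
proof -
  define B where "B = x + s\<^sup>2"
  have B: "0 < B" "B \<le> 2 * x"
    using assms(1,2) zero_le_power2[of s] unfolding B_def by linarith+
  have "x\<^sup>2 * ((a - 1) * B) = - (x\<^sup>2 * s\<^sup>2) - (b * s) * s\<^sup>2"
    using eq unfolding B_def by (simp add: algebra_simps eval_nat_numeral)
  also have "\<dots> \<le> x\<^sup>2 * (- s\<^sup>2 / 2)"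
    using mult_right_mono[of "- (x\<^sup>2/2)" "b * s" "s\<^sup>2"] assms(3) by (simp add: algebra_simps)
  finally have aB: "(a - 1) * B \<le> - s\<^sup>2 / 2"
    using assms(1) mult_le_cancel_left_pos[of "x\<^sup>2" "(a - 1) * B" "- s\<^sup>2 / 2"] by simp
  then have "a - 1 \<le> 0"
    using B(1) zero_le_power2[of s] mult_pos_pos[of "a - 1" B] by linarith
  then have "(a - 1) * (2 * x) \<le> - s\<^sup>2 / 2"
    using aB B(2) mult_left_mono_neg[of B "2 * x" "a - 1"] by linarith
  then show ?thesis
    using assms(1) by (simp add: field_simps)
qed

lemma first_component_slice_second_derivative_le:
  fixes f f' f'' c :: "real \<Rightarrow> real"
  assumes x: "0 < x" "x \<le> 1 / 4" and "M \<ge> 1"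
    and slice: "\<And>s. \<bar>s\<bar> \<le> x\<^sup>2 / (2 * M) \<Longrightarrow>
      (f has_real_derivative f' s) (at s) \<and> (f' has_real_derivative f'' s) (at s) \<and>
      m \<le> f'' s \<and> \<bar>c s\<bar> \<le> M \<and> x ^ 3 = f s * (x ^ 3 + x\<^sup>2 * s\<^sup>2) + c s * s ^ 3"
  shows "m \<le> - 1 / (2 * x)"
proof -
  define t where "t = x\<^sup>2 / (2 * M)"
  have t: "t > 0" "t * M = x\<^sup>2 / 2" "t \<le> x"
    using x \<open>M \<ge> 1\<close> by (auto simp: t_def field_simps power2_eq_square intro: order_trans[of _ x])
  have upper: "f s - 1 \<le> - s\<^sup>2 / (4 * x)" if "\<bar>s\<bar> \<le> t" for s
  proof (rule first_component_coefficient_le)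
    have "s\<^sup>2 \<le> t\<^sup>2" using that by (metis abs_le_square_iff abs_of_pos t(1))
    also have "t\<^sup>2 \<le> x\<^sup>2" using t by (intro power_mono) auto
    also have "x\<^sup>2 \<le> x" using x by (simp add: power2_eq_square mult_le_cancel_left1)
    finally show "s\<^sup>2 \<le> x" .
    have "\<bar>c s * s\<bar> \<le> M * t"
      unfolding abs_mult using slice[of s] that t_def by (intro mult_mono) auto
    then show "\<bar>c s * s\<bar> \<le> x\<^sup>2 / 2" using t(2) by (simp add: mult.commute)
  qed (use x slice[of s] that t_def in auto)
  have "f 0 = 1"
    using slice[of 0] t(1) x unfolding t_def by simp
  then have "m * t\<^sup>2 \<le> - t\<^sup>2 / (4 * x) - t\<^sup>2 / (4 * x)"
    using second_difference_ge[of t f f' f'' m] upper[of t] upper[of "-t"] slice t(1)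
    unfolding t_def by fastforce
  also have "\<dots> = (- 1 / (2 * x)) * t\<^sup>2" using x by (simp add: field_simps)
  finally show ?thesis
    using t(1) mult_le_cancel_right_pos[of "t\<^sup>2" m "- 1 / (2 * x)"] by simp
qed

lemma no_C2_first_component_solution:
  fixes a b :: "real \<times> real \<Rightarrow> real"
  assumes "open U" "0 \<in> U" "Ck_on 2 U a" "continuous_on U b"
    and eq: "\<And>p. p \<in> U \<Longrightarrow> fst p ^ 3 = a p * (fst p ^ 3 + fst p ^ 2 * snd p ^ 2) + b p * snd p ^ 3"
  shows False
proof -
  define a' where "a' = (\<lambda>p. frechet_derivative a (at p) (0, 1))"
  define a'' where "a'' = (\<lambda>p. frechet_derivative a' (at p) (0, 1))"
  have "Ck_on (Suc 1) U a"
    using assms(3) by (simp only: Suc_1)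
  then have "Ck_on (Suc 0) U a'" and da: "\<And>x t. (x, t) \<in> U \<Longrightarrow> ((\<lambda>s. a (x, s)) has_real_derivative a' (x, t)) (at t)"
    using Ck_on_Suc_slice_snd[of 1 U a] unfolding a'_def One_nat_def by blast+
  then have "continuous_on U a''" and da': "\<And>x t. (x, t) \<in> U \<Longrightarrow> ((\<lambda>s. a' (x, s)) has_real_derivative a'' (x, t)) (at t)"
    using Ck_on_Suc_slice_snd[of 0 U a'] unfolding a''_def Ck_on.simps(1) by blast+
  then have "isCont a'' 0" "isCont b 0"
    using assms(1,2,4) continuous_on_eq_continuous_at by blast+
  then have "\<forall>\<^sub>F p in nhds 0. p \<in> U \<and> dist (a'' p) (a'' 0) < 1 \<and> dist (b p) (b 0) < 1"
    using assms(1,2) by (intro eventually_conj eventually_nhds_in_open)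
      (auto simp: isCont_def tendsto_iff eventually_nhds_conv_at)
  then obtain r where "r > 0" and near0: "\<And>p. dist p 0 < r \<Longrightarrow> p \<in> U \<and> a'' p > a'' 0 - 1 \<and> \<bar>b p\<bar> < \<bar>b 0\<bar> + 1"
    unfolding eventually_nhds_metric by (force simp: dist_real_def)
  define K where "K = \<bar>a'' 0\<bar> + 2"
  define x where "x = min (min (r / 4) (1 / 4)) (1 / (2 * K))"
  have x: "0 < x" "x \<le> r / 4" "x \<le> 1 / 4"
    using \<open>r > 0\<close> by (auto simp: x_def K_def)
  define M where "M = \<bar>b 0\<bar> + 1"
  have slice: "((\<lambda>s. a (x, s)) has_real_derivative a' (x, s)) (at s) \<and>
      ((\<lambda>s. a' (x, s)) has_real_derivative a'' (x, s)) (at s) \<and>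
      a'' 0 - 1 \<le> a'' (x, s) \<and> \<bar>b (x, s)\<bar> \<le> M \<and>
      x ^ 3 = a (x, s) * (x ^ 3 + x\<^sup>2 * s\<^sup>2) + b (x, s) * s ^ 3"
    if "\<bar>s\<bar> \<le> x\<^sup>2 / (2 * M)" for s
  proof -
    have "\<bar>s\<bar> * 1 \<le> \<bar>s\<bar> * (2 * M)"
      by (intro mult_left_mono) (auto simp: M_def)
    also have "\<dots> \<le> x\<^sup>2"
      using that by (simp add: M_def field_simps)
    also have "\<dots> \<le> x"
      using x by (simp add: power2_eq_square mult_le_cancel_left1)
    finally have "dist (x, s) 0 < r"
      using norm_Pair_le[of x s] x by (simp add: dist_norm)
    then have "(x, s) \<in> U" "a'' 0 - 1 < a'' (x, s)" "\<bar>b (x, s)\<bar> < M"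
      using near0 unfolding M_def by blast+
    then show ?thesis
      using da da' eq[of "(x, s)"] by simp
  qed
  have "a'' 0 - 1 \<le> - 1 / (2 * x)"
    by (rule first_component_slice_second_derivative_le[OF x(1,3) _ slice]) (simp add: M_def)
  moreover have "x \<le> 1 / (2 * K)"
    by (simp add: x_def)
  then have "K \<le> 1 / (2 * x)"
    using x(1) by (simp add: K_def field_simps)
  ultimately show False
    by (simp add: K_def)
qed

theorem mainTheorem7:
  shows "(\<exists>U \<delta>. open U \<and> (0::real \<times> real) \<in> U \<and> \<delta> > 0 \<and>
            (\<forall>p\<in>U. dphi p (Xf p) \<ge> \<delta> * ((norm (Xf p))\<^sup>2 + covec_norm2 (dphi p))))
       \<and> \<not> (\<exists>U' g11 g12 g21 g22. open U' \<and> (0::real \<times> real) \<in> U' \<and>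
            smooth_on U' g11 \<and> smooth_on U' g12 \<and> smooth_on U' g21 \<and> smooth_on U' g22 \<and>
            (\<forall>p\<in>U'. \<forall>v. v \<noteq> 0 \<longrightarrow> bilin (g11 p) (g12 p) (g21 p) (g22 p) v v > 0) \<and>
            (\<forall>p\<in>U'. \<forall>w. dphi p w = bilin (g11 p) (g12 p) (g21 p) (g22 p) (Xf p) w))"
proof (intro conjI notI dphi_X_coercive)
  assume "\<exists>U' g11 g12 g21 g22. open U' \<and> (0::real \<times> real) \<in> U' \<and>
            smooth_on U' g11 \<and> smooth_on U' g12 \<and> smooth_on U' g21 \<and> smooth_on U' g22 \<and>
            (\<forall>p\<in>U'. \<forall>v. v \<noteq> 0 \<longrightarrow> bilin (g11 p) (g12 p) (g21 p) (g22 p) v v > 0) \<and>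
            (\<forall>p\<in>U'. \<forall>w. dphi p w = bilin (g11 p) (g12 p) (g21 p) (g22 p) (Xf p) w)"
  then obtain U g11 g12 g21 g22 where "open U" "(0::real \<times> real) \<in> U"
    and "smooth_on U g11" "smooth_on U g21"
    and metric: "\<And>p w. p \<in> U \<Longrightarrow> dphi p w = bilin (g11 p) (g12 p) (g21 p) (g22 p) (Xf p) w"
    by blast
  moreover have "Ck_on 2 U g11" "continuous_on U g21"
    using \<open>smooth_on U g11\<close> \<open>smooth_on U g21\<close> Ck_on.simps(1) unfolding smooth_on_def by metis+
  moreover have "fst p ^ 3 = g11 p * (fst p ^ 3 + fst p ^ 2 * snd p ^ 2) + g21 p * snd p ^ 3" if "p \<in> U" for p
    using metric[OF that, of "(1, 0)"] by (simp add: dphi_eq bilin_def Xf_def)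
  ultimately show False
    using no_C2_first_component_solution by blast
qed

end
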